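(* Let $G$ be a finite simple graph that contains a cycle of odd length. Then $S(G)$ contains a subdivision of $K_{3,3}$ as a subgraph.
   Context: For a graph $G$, the great shadow $S(G)$ is the graph obtained from $G$ by adding, for each vertex $v$ of $G$, a new vertex $v'$ (the shadow vertex of $v$) and making $v'$ adjacent to $v$ and to every neighbor of $v$ in $G$; no other edges are added. A subdivision of a graph $F$ is a graph obtained from $F$ by replacing edges with internally vertex-disjoint paths. *)

theory Defs
  imports Main
begin

definition simple_graph :: "'a set \<Rightarrow> ('a \<Rightarrow> 'a \<Rightarrow> bool) \<Rightarrow> bool" where
  "simple_graph V E \<longleftrightarrow> finite V \<and> (\<forall>x y. E x y \<longrightarrow> x \<in> V \<and> y \<in> V)
     \<and> (\<forall>x y. E x y \<longrightarrow> E y x) \<and> (\<forall>x. \<not> E x x)"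

definition is_cycle :: "'a set \<Rightarrow> ('a \<Rightarrow> 'a \<Rightarrow> bool) \<Rightarrow> 'a list \<Rightarrow> bool" where
  "is_cycle V E c \<longleftrightarrow> length c \<ge> 3 \<and> distinct c \<and> set c \<subseteq> V
     \<and> (\<forall>i < length c. E (c ! i) (c ! ((i + 1) mod length c)))"

definition has_odd_cycle :: "'a set \<Rightarrow> ('a \<Rightarrow> 'a \<Rightarrow> bool) \<Rightarrow> bool" where
  "has_odd_cycle V E \<longleftrightarrow> (\<exists>c. is_cycle V E c \<and> odd (length c))"

text \<open>Great shadow: original vertex v is Inl v, its shadow vertex v' is Inr v.\<close>
definition shadow_V :: "'a set \<Rightarrow> ('a + 'a) set" where
  "shadow_V V = Inl ` V \<union> Inr ` V"

fun shadow_E :: "'a set \<Rightarrow> ('a \<Rightarrow> 'a \<Rightarrow> bool) \<Rightarrow> 'a + 'a \<Rightarrow> 'a + 'a \<Rightarrow> bool" where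
  "shadow_E V E (Inl u) (Inl v) = E u v"
| "shadow_E V E (Inl u) (Inr v) = ((u = v \<and> v \<in> V) \<or> E v u)"
| "shadow_E V E (Inr u) (Inl v) = ((u = v \<and> u \<in> V) \<or> E u v)"
| "shadow_E V E (Inr u) (Inr v) = False"

definition is_path :: "'a set \<Rightarrow> ('a \<Rightarrow> 'a \<Rightarrow> bool) \<Rightarrow> 'a list \<Rightarrow> bool" where
  "is_path V E p \<longleftrightarrow> p \<noteq> [] \<and> distinct p \<and> set p \<subseteq> V
     \<and> (\<forall>i. i + 1 < length p \<longrightarrow> E (p ! i) (p ! (i + 1)))"

definition interior :: "'a list \<Rightarrow> 'a set" where
  "interior p = set (butlast (tl p))"

definition contains_subdivision ::
  "'a set \<Rightarrow> ('a \<Rightarrow> 'a \<Rightarrow> bool) \<Rightarrow> 'b set \<Rightarrow> ('b \<Rightarrow> 'b \<Rightarrow> bool) \<Rightarrow> bool" where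
  "contains_subdivision V E VF EF \<longleftrightarrow>
    (\<exists>(f :: 'b \<Rightarrow> 'a) (P :: 'b \<Rightarrow> 'b \<Rightarrow> 'a list).
       inj_on f VF \<and> f ` VF \<subseteq> V \<and>
       (\<forall>x y. EF x y \<longrightarrow>
          is_path V E (P x y) \<and> hd (P x y) = f x \<and> last (P x y) = f y \<and>
          P y x = rev (P x y) \<and> interior (P x y) \<inter> f ` VF = {}) \<and>
       (\<forall>x y x' y'. EF x y \<longrightarrow> EF x' y' \<longrightarrow> {x, y} \<noteq> {x', y'} \<longrightarrow>
          interior (P x y) \<inter> set (P x' y') = {}))"

definition K33_V :: "nat set" where
  "K33_V = {0..<6}"

definition K33_E :: "nat \<Rightarrow> nat \<Rightarrow> bool" where
  "K33_E x y \<longleftrightarrow> (x < 3 \<and> 3 \<le> y \<and> y < 6) \<or> (y < 3 \<and> 3 \<le> x \<and> x < 6)"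

end

theory Submission
  imports Defs
begin

text \<open>Write the odd cycle as \<open>x # p\<close>, so that \<open>p\<close> is a path with an even number of
  vertices between the two neighbours \<open>hd p\<close> and \<open>last p\<close> of \<open>x\<close>. Take the original
  copies of \<open>hd p\<close>, \<open>last p\<close>, \<open>x\<close> as one side of K_{3,3} and their shadows as the
  other. A vertex of \<open>S(G)\<close> is adjacent to its own shadow and to the shadows of its
  neighbours, so seven of the nine required pairs are edges. The remaining two,
  \<open>hd p\<close> to the shadow of \<open>last p\<close> and \<open>last p\<close> to the shadow of \<open>hd p\<close>, are joined by the
  two alternating lifts of \<open>p\<close>, which switch between original and shadow copies at
  every step: since \<open>p\<close> has an even number of vertices each lift ends on the other
  copy, and the two lifts use complementary copies of each vertex of \<open>p\<close>, hence are
  disjoint.\<close>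

lemma is_path_iff_successively:
  "is_path V E p \<longleftrightarrow> p \<noteq> [] \<and> distinct p \<and> set p \<subseteq> V \<and> successively E p"
  unfolding is_path_def successively_conv_nth by simp

lemma is_path_rev:
  assumes "\<And>u v. E u v \<Longrightarrow> E v u"
  shows "is_path V E (rev p) \<longleftrightarrow> is_path V E p"
  using assms by (auto simp: is_path_iff_successively elim: successively_mono)

lemma is_cycle_ConsD:
  assumes "is_cycle V E (x # p)"
  shows "is_path V E p" "E x (hd p)" "E (last p) x"
proof -
  let ?c = "x # p"
  have len: "2 \<le> length p" and dist: "distinct ?c" and sub: "set ?c \<subseteq> V"
    and adj: "\<And>i. i < length ?c \<Longrightarrow> E (?c ! i) (?c ! (Suc i mod length ?c))"
    using assms unfolding is_cycle_def by auto
  have "E (p ! i) (p ! Suc i)" if "Suc i < length p" for i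
    using adj[of "Suc i"] that by simp
  then show "is_path V E p"
    using len dist sub unfolding is_path_def by auto
  show "E x (hd p)"
    using adj[of 0] len by (cases p) auto
  show "E (last p) x"
    using adj[of "length p"] len by (simp add: last_conv_nth nth_Cons' split: if_splits)
qed

lemma interior_subset: "interior p \<subseteq> set p"
  unfolding interior_def by (cases p) (auto dest: in_set_butlastD)

lemma interior_rev: "interior (rev p) = interior p"
  unfolding interior_def by (metis butlast_rev butlast_tl rev_rev_ident set_rev)

lemma interior_map: "interior (map g p) = g ` interior p"
  unfolding interior_def by (cases p) (simp_all add: map_butlast[symmetric])

lemma interior_pair: "interior [u, v] = {}"
  unfolding interior_def by simp

lemma hd_notin_interior: "distinct p \<Longrightarrow> hd p \<notin> interior p"
  unfolding interior_def by (cases p) (auto dest: in_set_butlastD)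

lemma last_notin_interior: "distinct p \<Longrightarrow> last p \<notin> interior p"
  using hd_notin_interior[of "rev p"] by (simp add: interior_rev hd_rev)

lemma shadow_E_sym:
  assumes "\<And>u v. E u v \<Longrightarrow> E v u" and "shadow_E V E s t"
  shows "shadow_E V E t s"
  using assms by (cases s; cases t) auto

definition lift_vertex :: "bool \<Rightarrow> 'a \<Rightarrow> 'a + 'a" where
  "lift_vertex b v = (if b then Inl v else Inr v)"

lemma lift_vertex_eq_iff: "lift_vertex b u = lift_vertex b' v \<longleftrightarrow> b = b' \<and> u = v"
  unfolding lift_vertex_def by auto

lemma case_sum_id_lift_vertex [simp]: "case_sum id id (lift_vertex b v) = v"
  unfolding lift_vertex_def by simp

lemma lift_vertex_in_shadow_V: "v \<in> V \<Longrightarrow> lift_vertex b v \<in> shadow_V V"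
  unfolding lift_vertex_def shadow_V_def by auto

lemma shadow_E_lift_vertex:
  "E u v \<Longrightarrow> E v u \<Longrightarrow> shadow_E V E (lift_vertex b u) (lift_vertex (\<not> b) v)"
  unfolding lift_vertex_def by auto

fun alternating_lift :: "bool \<Rightarrow> 'a list \<Rightarrow> ('a + 'a) list" where
  "alternating_lift b [] = []"
| "alternating_lift b (v # p) = lift_vertex b v # alternating_lift (\<not> b) p"

lemma map_case_sum_alternating_lift: "map (case_sum id id) (alternating_lift b p) = p"
  by (induction p arbitrary: b) auto

lemma set_alternating_lift_base: "case_sum id id ` set (alternating_lift b p) = set p"
  by (metis list.set_map map_case_sum_alternating_lift)

lemma alternating_lift_eq_Nil_iff [simp]: "alternating_lift b p = [] \<longleftrightarrow> p = []"
  by (cases p) auto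

lemma hd_alternating_lift: "p \<noteq> [] \<Longrightarrow> hd (alternating_lift b p) = lift_vertex b (hd p)"
  by (cases p) auto

lemma last_alternating_lift:
  "p \<noteq> [] \<Longrightarrow> last (alternating_lift b p) = lift_vertex (b \<longleftrightarrow> odd (length p)) (last p)"
  by (induction p arbitrary: b) auto

lemma alternating_lifts_disjoint:
  "distinct p \<Longrightarrow> set (alternating_lift b p) \<inter> set (alternating_lift (\<not> b) p) = {}"
proof (induction p arbitrary: b)
  case (Cons v p)
  have "lift_vertex b' v \<notin> set (alternating_lift b'' p)" for b' b''
    using Cons.prems set_alternating_lift_base[of b'' p]
    by (metis case_sum_id_lift_vertex distinct.simps(2) imageI)
  with Cons show ?case by (auto simp: lift_vertex_eq_iff)
qed simp

lemma is_path_alternating_lift: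
  assumes sym: "\<And>u v. E u v \<Longrightarrow> E v u" and path: "is_path V E p"
  shows "is_path (shadow_V V) (shadow_E V E) (alternating_lift b p)"
proof -
  have "successively (shadow_E V E) (alternating_lift b p)" if "successively E p" for b
    using that by (induction p arbitrary: b)
      (auto simp: successively_Cons hd_alternating_lift sym shadow_E_lift_vertex)
  moreover have "distinct (alternating_lift b p)"
    using path distinct_map[of "case_sum id id"] map_case_sum_alternating_lift[of b p]
    unfolding is_path_def by metis
  moreover have "set (alternating_lift b p) \<subseteq> shadow_V V" if "set p \<subseteq> V" for b
    using that by (induction p arbitrary: b) (auto simp: lift_vertex_in_shadow_V)
  ultimately show ?thesis
    using path by (simp add: is_path_iff_successively)
qed

lemma contains_subdivisionI:
  fixes f :: "'b::linorder \<Rightarrow> 'a" and Q :: "'b \<Rightarrow> 'b \<Rightarrow> 'a list"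
  assumes sym: "\<And>u v. E u v \<Longrightarrow> E v u"
    and EF_sym: "\<And>x y. EF x y \<Longrightarrow> EF y x" and EF_irrefl: "\<And>x. \<not> EF x x"
    and inj: "inj_on f VF" and range: "f ` VF \<subseteq> V"
    and paths: "\<And>x y. EF x y \<Longrightarrow> x < y \<Longrightarrow>
      is_path V E (Q x y) \<and> hd (Q x y) = f x \<and> last (Q x y) = f y \<and> interior (Q x y) \<inter> f ` VF = {}"
    and disjoint: "\<And>x y x' y'. EF x y \<Longrightarrow> x < y \<Longrightarrow> EF x' y' \<Longrightarrow> x' < y' \<Longrightarrow>
      (x, y) \<noteq> (x', y') \<Longrightarrow> interior (Q x y) \<inter> set (Q x' y') = {}"
  shows "contains_subdivision V E VF EF"
proof -
  define P where "P x y = (if x < y then Q x y else rev (Q y x))" for x y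
  have oriented: "\<exists>x' y'. EF x' y' \<and> x' < y' \<and> {x, y} = {x', y'} \<and>
      set (P x y) = set (Q x' y') \<and> interior (P x y) = interior (Q x' y')"
    if "EF x y" for x y
  proof (cases "x < y")
    case True
    with that show ?thesis unfolding P_def by auto
  next
    case False
    with that EF_irrefl have "y < x" by (metis linorder_neqE)
    with that EF_sym False show ?thesis
      unfolding P_def by (intro exI[of _ y] exI[of _ x]) (auto simp: interior_rev)
  qed
  have "is_path V E (P x y) \<and> hd (P x y) = f x \<and> last (P x y) = f y \<and>
      P y x = rev (P x y) \<and> interior (P x y) \<inter> f ` VF = {}" if "EF x y" for x y
  proof (cases "x < y")
    case True
    with that paths[of x y] show ?thesis unfolding P_def by auto
  next
    case False
    with that EF_irrefl have "y < x" by (metis linorder_neqE)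
    with that EF_sym paths[of y x] show ?thesis
      unfolding P_def by (auto simp: is_path_rev sym hd_rev last_rev interior_rev)
  qed
  moreover have "interior (P x y) \<inter> set (P x' y') = {}"
    if edge: "EF x y" and edge': "EF x' y'" and different: "{x, y} \<noteq> {x', y'}" for x y x' y'
  proof -
    obtain u v where "EF u v" "u < v" "{x, y} = {u, v}"
      "interior (P x y) = interior (Q u v)"
      using oriented[OF edge] by blast
    moreover obtain u' v' where "EF u' v'" "u' < v'" "{x', y'} = {u', v'}"
      "set (P x' y') = set (Q u' v')"
      using oriented[OF edge'] by blast
    ultimately show ?thesis
      using different disjoint[of u v u' v'] by auto
  qed
  ultimately show ?thesis
    unfolding contains_subdivision_def using inj range by blast
qed

locale odd_cycle =
  fixes V :: "'a set" and E :: "'a \<Rightarrow> 'a \<Rightarrow> bool" and x :: 'a and p :: "'a list"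
  assumes sym: "\<And>u v. E u v \<Longrightarrow> E v u"
    and cycle: "is_cycle V E (x # p)"
    and even_length: "even (length p)"
begin

lemma path: "is_path V E p"
  and adj_hd: "E x (hd p)" and adj_last: "E (last p) x"
  using is_cycle_ConsD[OF cycle] by auto

lemma distinct_path: "distinct p" and path_not_Nil: "p \<noteq> []"
  using path unfolding is_path_def by auto

definition corners :: "'a list" where
  "corners = [hd p, last p, x]"

lemma distinct_corners: "distinct corners"
proof -
  have "2 \<le> length p" and "x \<notin> set p"
    using cycle unfolding is_cycle_def by auto
  with distinct_path show ?thesis
    unfolding corners_def by (cases p) auto
qed

lemma corners_subset: "set corners \<subseteq> V"
  using cycle path_not_Nil unfolding is_cycle_def corners_def by auto

lemma interior_disjoint_corners: "interior p \<inter> set corners = {}"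
proof -
  have "x \<notin> set p"
    using cycle unfolding is_cycle_def by auto
  then show ?thesis
    using hd_notin_interior[OF distinct_path] last_notin_interior[OF distinct_path] interior_subset[of p]
    unfolding corners_def by auto
qed

definition branch :: "nat \<Rightarrow> 'a + 'a" where
  "branch i = lift_vertex (i < 3) (corners ! (i mod 3))"

definition K33_path :: "nat \<Rightarrow> nat \<Rightarrow> ('a + 'a) list" where
  "K33_path i j = (if (i, j) = (0, 4) then alternating_lift True p
     else if (i, j) = (1, 3) then rev (alternating_lift False p) else [branch i, branch j])"

lemma branch_base: "case_sum id id (branch i) \<in> set corners"
  using nth_mem[of "i mod 3" corners] unfolding branch_def by (simp add: corners_def)

lemma inj_on_branch: "inj_on branch K33_V"
proof (rule inj_onI)
  fix i j assume "i \<in> K33_V" "j \<in> K33_V" "branch i = branch j"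
  then have "i < 6" "j < 6" "i < 3 \<longleftrightarrow> j < 3" "i mod 3 = j mod 3"
    using distinct_corners unfolding K33_V_def branch_def corners_def
    by (auto simp: lift_vertex_eq_iff nth_eq_iff_index_eq)
  then show "i = j" by presburger
qed

lemma branch_in_shadow_V: "branch ` K33_V \<subseteq> shadow_V V"
  using branch_base corners_subset by (auto simp: branch_def intro!: lift_vertex_in_shadow_V)

lemma interior_alternating_lift_disjoint_branch:
  "interior (alternating_lift b p) \<inter> branch ` K33_V = {}"
proof -
  have "case_sum id id ` interior (alternating_lift b p) = interior p"
    by (metis interior_map map_case_sum_alternating_lift)
  then show ?thesis
    using interior_disjoint_corners branch_base by blast
qed

lemma shadow_sym: "shadow_E V E s t \<Longrightarrow> shadow_E V E t s"
  using shadow_E_sym sym by metis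

lemma shadow_E_branch:
  assumes "i < 3" "3 \<le> j" "j < 6" "(i, j) \<noteq> (0, 4)" "(i, j) \<noteq> (1, 3)"
  shows "shadow_E V E (branch i) (branch j)"
proof -
  have "i \<in> {0, 1, 2}" "j \<in> {3, 4, 5}"
    using assms by auto
  then show ?thesis
    using assms corners_subset adj_hd adj_last sym[OF adj_hd] sym[OF adj_last]
    unfolding branch_def corners_def lift_vertex_def by auto
qed

lemma K33_path_valid:
  assumes "i < 3" "3 \<le> j" "j < 6"
  shows "is_path (shadow_V V) (shadow_E V E) (K33_path i j) \<and> hd (K33_path i j) = branch i \<and>
    last (K33_path i j) = branch j \<and> interior (K33_path i j) \<inter> branch ` K33_V = {}"
proof -
  consider "(i, j) = (0, 4)" | "(i, j) = (1, 3)" | "(i, j) \<noteq> (0, 4)" "(i, j) \<noteq> (1, 3)"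
    by blast
  then show ?thesis
  proof cases
    case 1
    then show ?thesis
      using is_path_alternating_lift[OF sym path] interior_alternating_lift_disjoint_branch
        path_not_Nil even_length
      by (simp add: K33_path_def branch_def corners_def hd_alternating_lift last_alternating_lift)
  next
    case 2
    then show ?thesis
      using is_path_alternating_lift[OF sym path] interior_alternating_lift_disjoint_branch
        path_not_Nil even_length
      by (simp add: K33_path_def branch_def corners_def is_path_rev[OF shadow_sym] hd_rev
          last_rev interior_rev hd_alternating_lift last_alternating_lift)
  next
    case 3
    have "branch i \<noteq> branch j"
      using inj_onD[OF inj_on_branch] assms unfolding K33_V_def by fastforce
    with 3 show ?thesis
      using shadow_E_branch[OF assms 3] branch_in_shadow_V assms
      by (auto simp: K33_path_def is_path_iff_successively interior_pair K33_V_def)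
  qed
qed

lemma interior_K33_path:
  "interior (K33_path i j) =
    (if (i, j) = (0, 4) then interior (alternating_lift True p)
     else if (i, j) = (1, 3) then interior (alternating_lift False p) else {})"
  by (simp add: K33_path_def interior_rev interior_pair)

lemma K33_paths_disjoint:
  assumes "(i, j) \<noteq> (i', j')" "i' < 6" "j' < 6"
  shows "interior (K33_path i j) \<inter> set (K33_path i' j') = {}"
proof -
  have lifts_disjoint: "interior (alternating_lift b p) \<inter> set (alternating_lift (\<not> b) p) = {}" for b
    using alternating_lifts_disjoint[OF distinct_path, of b] interior_subset[of "alternating_lift b p"]
    by blast
  consider "(i', j') = (0, 4)" | "(i', j') = (1, 3)" | "(i', j') \<noteq> (0, 4)" "(i', j') \<noteq> (1, 3)"
    by blast
  then show ?thesis
  proof cases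
    case 1
    then have "set (K33_path i' j') = set (alternating_lift True p)"
      by (simp add: K33_path_def)
    with 1 show ?thesis
      using assms(1) lifts_disjoint[of False] unfolding interior_K33_path by auto
  next
    case 2
    then have "set (K33_path i' j') = set (alternating_lift False p)"
      by (simp add: K33_path_def)
    with 2 show ?thesis
      using assms(1) lifts_disjoint[of True] unfolding interior_K33_path by auto
  next
    case 3
    then have "set (K33_path i' j') \<subseteq> branch ` K33_V"
      using assms(2,3) unfolding K33_path_def K33_V_def by auto
    then show ?thesis
      using interior_alternating_lift_disjoint_branch unfolding interior_K33_path by auto
  qed
qed

lemma shadow_contains_K33_subdivision:
  "contains_subdivision (shadow_V V) (shadow_E V E) K33_V K33_E"
proof (rule contains_subdivisionI[OF shadow_sym _ _ inj_on_branch branch_in_shadow_V])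
  fix i j assume "K33_E i j" "i < j"
  then show "is_path (shadow_V V) (shadow_E V E) (K33_path i j) \<and> hd (K33_path i j) = branch i \<and>
      last (K33_path i j) = branch j \<and> interior (K33_path i j) \<inter> branch ` K33_V = {}"
    using K33_path_valid unfolding K33_E_def by auto
next
  fix i j i' j' assume "K33_E i' j'" and distinct_edges: "(i, j) \<noteq> (i', j')"
  then have "i' < 6" "j' < 6"
    unfolding K33_E_def by auto
  with distinct_edges show "interior (K33_path i j) \<inter> set (K33_path i' j') = {}"
    by (rule K33_paths_disjoint)
qed (auto simp: K33_E_def)

end

theorem lemma5p1:
  fixes V :: "'a set" and E :: "'a \<Rightarrow> 'a \<Rightarrow> bool"
  assumes "simple_graph V E"
    and "has_odd_cycle V E"
  shows "contains_subdivision (shadow_V V) (shadow_E V E) K33_V K33_E"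
proof -
  have sym: "\<And>u v. E u v \<Longrightarrow> E v u"
    using assms(1) unfolding simple_graph_def by blast
  obtain c where cycle: "is_cycle V E c" and odd: "odd (length c)"
    using assms(2) unfolding has_odd_cycle_def by blast
  then obtain x p where "c = x # p"
    unfolding is_cycle_def by (cases c) auto
  with cycle odd interpret odd_cycle V E x p
    using sym by unfold_locales simp_all
  show ?thesis
    by (rule shadow_contains_K33_subdivision)
qed

end
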